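(* Let $(Q,F)$ be a finite ice quiver with $Q_0=\{1,\dots,m\}$ and $F_0=\{n+1,\dots,m\}$ ($1\le n\le m$), with Euler matrix $\widehat B$, and assume $\det\widehat B\neq0$. Let $\widetilde B$ be the $m\times n$ matrix formed by the first $n$ columns of $\widehat B$ and $\Lambda=|\det\widehat B|\cdot(\widehat B^{-T}-\widehat B^{-1})$. Then $(\widetilde B,\Lambda)$ is a compatible pair, and its type is $2|\det\widehat B|\cdot I_n$.
   Context: An ice quiver $(Q,F)$ is a quiver $Q$ with a subquiver $F$ (frozen vertices and arrows). The Euler matrix $\widehat B=(b_{ij})_{1\le i,j\le m}$ is defined by $b_{ii}=0$ for $1\le i\le n$, $b_{ii}=1$ for $i>n$, and for $i\neq j$, $b_{ij}=\#\{\text{unfrozen arrows } i\to j\}-\#\{\text{arrows } j\to i\}$. A pair $(\widetilde B,\Lambda)$ of an integer $m\times n$ matrix and a skew-symmetric integer $m\times m$ matrix is compatible if $\widetilde B^T\Lambda=(S\mid\mathbf 0)$ where $S$ is an $n\times n$ diagonal matrix with strictly positive integer diagonal entries and $\mathbf 0$ is the $n\times(m-n)$ zero matrix; $S$ is called the type. *)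

theory Defs
  imports "Jordan_Normal_Form.Gauss_Jordan_Elimination" "Jordan_Normal_Form.Determinant"
begin

text \<open>Arrows are elements of Q1 (of an arbitrary type), with source and target maps;
  F1 is the set of frozen arrows, a set of arrows between frozen vertices.\<close>
definition ice_quiver :: "nat \<Rightarrow> nat \<Rightarrow> 'e set \<Rightarrow> 'e set \<Rightarrow> ('e \<Rightarrow> nat) \<Rightarrow> ('e \<Rightarrow> nat) \<Rightarrow> bool" where
  "ice_quiver m n Q1 F1 src tgt \<longleftrightarrow>
     finite Q1 \<and> (\<forall>a\<in>Q1. src a \<in> {1..m} \<and> tgt a \<in> {1..m}) \<and>
     F1 \<subseteq> Q1 \<and> (\<forall>a\<in>F1. src a \<in> {n+1..m} \<and> tgt a \<in> {n+1..m})"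

definition euler_entry :: "nat \<Rightarrow> 'e set \<Rightarrow> 'e set \<Rightarrow> ('e \<Rightarrow> nat) \<Rightarrow> ('e \<Rightarrow> nat) \<Rightarrow> nat \<Rightarrow> nat \<Rightarrow> int" where
  "euler_entry n Q1 F1 src tgt i j =
     (if i = j then (if i \<le> n then 0 else 1)
      else int (card {a \<in> Q1 - F1. src a = i \<and> tgt a = j}) - int (card {a \<in> Q1. src a = j \<and> tgt a = i}))"

text \<open>The Euler matrix; matrix index i (0-based) corresponds to vertex i+1.\<close>
definition euler_mat :: "nat \<Rightarrow> nat \<Rightarrow> 'e set \<Rightarrow> 'e set \<Rightarrow> ('e \<Rightarrow> nat) \<Rightarrow> ('e \<Rightarrow> nat) \<Rightarrow> int mat" where
  "euler_mat m n Q1 F1 src tgt = mat m m (\<lambda>(i,j). euler_entry n Q1 F1 src tgt (i+1) (j+1))"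

definition compatible_of_type :: "int mat \<Rightarrow> int mat \<Rightarrow> int mat \<Rightarrow> bool" where
  "compatible_of_type B L S \<longleftrightarrow>
     (let m = dim_row B; n = dim_col B in
       L \<in> carrier_mat m m \<and> transpose_mat L = - L \<and>
       S \<in> carrier_mat n n \<and> (\<forall>i<n. \<forall>j<n. i \<noteq> j \<longrightarrow> S $$ (i,j) = 0) \<and> (\<forall>i<n. S $$ (i,i) > 0) \<and>
       (\<forall>i<n. \<forall>j<m. (transpose_mat B * L) $$ (i,j) = (if j < n then S $$ (i,j) else 0)))"

definition compatible_pair :: "int mat \<Rightarrow> int mat \<Rightarrow> bool" where
  "compatible_pair B L \<longleftrightarrow> (\<exists>S. compatible_of_type B L S)"

end

theory Submission
  imports Defs
begin

text \<open>Write A for the Euler matrix and d = det A. Because frozen arrows join frozen vertices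
  only, the first n columns of A are the negated first n rows, so the first n rows of A^T are
  those of -A. Hence, for the adjugate adj A = d A^-1, the first n rows of A^T (adj A^T - adj A)
  are those of (adj A * A)^T + A * adj A = 2 d I. Multiplying by sgn d gives the integer
  matrix |d| (A^-T - A^-1).\<close>

definition skew_adj :: "'a::comm_ring_1 mat \<Rightarrow> 'a mat" where
  "skew_adj A = transpose_mat (adj_mat A) - adj_mat A"

lemma skew_adj_carrier: "A \<in> carrier_mat n n \<Longrightarrow> skew_adj A \<in> carrier_mat n n"
  using adj_mat(1)[of A n] unfolding skew_adj_def by auto

lemma transpose_smult_skew_adj:
  "A \<in> carrier_mat n n \<Longrightarrow> transpose_mat (c \<cdot>\<^sub>m skew_adj A) = - (c \<cdot>\<^sub>m skew_adj A)"
  using adj_mat(1)[of A n] unfolding skew_adj_def by (intro eq_matI) (auto simp: algebra_simps)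

lemma transpose_mult_skew_adj:
  fixes A :: "'a::comm_ring_1 mat"
  assumes A: "A \<in> carrier_mat m m" and i: "i < m" and j: "j < m"
    and skew: "\<And>k. k < m \<Longrightarrow> A $$ (k,i) = - A $$ (i,k)"
  shows "(transpose_mat A * skew_adj A) $$ (i,j) = (if i = j then 2 * det A else 0)"
proof -
  have adj: "adj_mat A \<in> carrier_mat m m" using adj_mat(1)[OF A] .
  have "transpose_mat A * transpose_mat (adj_mat A) = transpose_mat (adj_mat A * A)"
    using A adj by (simp add: transpose_mult)
  also have "\<dots> = det A \<cdot>\<^sub>m 1\<^sub>m m"
    using adj_mat(3)[OF A] by (intro eq_matI) auto
  finally have left: "transpose_mat A * transpose_mat (adj_mat A) = det A \<cdot>\<^sub>m 1\<^sub>m m" .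
  have "row (transpose_mat A) i = - row A i"
    using A i skew by (intro eq_vecI) auto
  then have "(transpose_mat A * adj_mat A) $$ (i,j) = - (A * adj_mat A) $$ (i,j)"
    using A adj i j by simp
  also have "\<dots> = - (if i = j then det A else 0)"
    using adj_mat(2)[OF A] i j by simp
  finally have right: "(transpose_mat A * adj_mat A) $$ (i,j) = - (if i = j then det A else 0)" .
  have "transpose_mat A * skew_adj A
      = transpose_mat A * transpose_mat (adj_mat A) - transpose_mat A * adj_mat A"
    unfolding skew_adj_def using A adj by (simp add: mult_minus_distrib_mat)
  then show ?thesis
    using left right A adj i j by simp
qed

lemma mat_inverse_of_int:
  fixes A :: "int mat"
  assumes A: "A \<in> carrier_mat m m" and det: "det A \<noteq> 0"
  shows "mat_inverse (map_mat (of_int :: int \<Rightarrow> 'a::field_char_0) A)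
    = Some ((1 / of_int (det A)) \<cdot>\<^sub>m map_mat of_int (adj_mat A))"
proof -
  let ?R = "map_mat (of_int :: int \<Rightarrow> 'a) A"
  let ?C = "(1 / of_int (det A)) \<cdot>\<^sub>m map_mat (of_int :: int \<Rightarrow> 'a) (adj_mat A)"
  have R: "?R \<in> carrier_mat m m" and C: "?C \<in> carrier_mat m m"
    using A adj_mat(1)[OF A] by auto
  have "?R * ?C = (1 / of_int (det A)) \<cdot>\<^sub>m map_mat of_int (A * adj_mat A)"
    using A adj_mat(1)[OF A] by (simp add: mult_smult_distrib of_int_hom.mat_hom_mult)
  also have "\<dots> = 1\<^sub>m m"
    using det unfolding adj_mat(2)[OF A] by (intro eq_matI) auto
  finally have RC: "?R * ?C = 1\<^sub>m m" .
  obtain B where B: "mat_inverse ?R = Some B"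
    using mat_inverse(1)[OF R] det_non_zero_imp_unit[OF R] det by fastforce
  then have BR: "B * ?R = 1\<^sub>m m" and B_carrier: "B \<in> carrier_mat m m"
    using mat_inverse(2)[OF R] by auto
  have "B = (B * ?R) * ?C"
    using B_carrier R C RC by (simp add: assoc_mult_mat)
  then show ?thesis
    using B BR left_mult_one_mat[OF C] by simp
qed

lemma compatible_of_type_sgn_det_skew_adj:
  fixes A :: "int mat"
  assumes A: "A \<in> carrier_mat m m" and nm: "n \<le> m" and det: "det A \<noteq> 0"
    and skew: "\<And>i k. i < n \<Longrightarrow> k < m \<Longrightarrow> A $$ (k,i) = - A $$ (i,k)"
  shows "compatible_of_type (mat m n (\<lambda>(i,j). A $$ (i,j))) (sgn (det A) \<cdot>\<^sub>m skew_adj A)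
           (2 * \<bar>det A\<bar> \<cdot>\<^sub>m 1\<^sub>m n)"
proof -
  let ?L = "sgn (det A) \<cdot>\<^sub>m skew_adj A"
  have L: "skew_adj A \<in> carrier_mat m m"
    using skew_adj_carrier[OF A] .
  have product: "(transpose_mat (mat m n (\<lambda>(i,j). A $$ (i,j))) * ?L) $$ (i,j)
      = (if i = j then 2 * \<bar>det A\<bar> else 0)" if ij: "i < n" "j < m" for i j
  proof -
    have "row (transpose_mat (mat m n (\<lambda>(i,j). A $$ (i,j)))) i = row (transpose_mat A) i"
      using A ij nm by (intro eq_vecI) auto
    then have "(transpose_mat (mat m n (\<lambda>(i,j). A $$ (i,j))) * ?L) $$ (i,j)
        = sgn (det A) * (transpose_mat A * skew_adj A) $$ (i,j)"
      using A L ij nm by (simp add: mult_smult_distrib[symmetric])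
    then show ?thesis
      using transpose_mult_skew_adj[OF A _ ij(2) skew[OF ij(1)]] ij nm
      by (simp add: abs_sgn)
  qed
  show ?thesis
    unfolding compatible_of_type_def Let_def
    using L transpose_smult_skew_adj[OF A] product det by auto
qed

lemma of_int_sgn_det_skew_adj:
  fixes A :: "int mat"
  assumes A: "A \<in> carrier_mat m m" and det: "det A \<noteq> 0"
  defines "Ainv \<equiv> the (mat_inverse (map_mat (of_int :: int \<Rightarrow> 'a::field_char_0) A))"
  shows "map_mat of_int (sgn (det A) \<cdot>\<^sub>m skew_adj A)
    = of_int \<bar>det A\<bar> \<cdot>\<^sub>m (transpose_mat Ainv - Ainv)"
proof -
  have abs_det: "(of_int \<bar>det A\<bar> :: 'a) = of_int (sgn (det A)) * of_int (det A)"
    by (simp flip: of_int_mult add: abs_sgn)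
  show ?thesis
    unfolding Ainv_def mat_inverse_of_int[OF A det] skew_adj_def option.sel
    using adj_mat(1)[OF A] det by (intro eq_matI) (auto simp: abs_det field_simps)
qed

lemma euler_mat_carrier: "euler_mat m n Q1 F1 src tgt \<in> carrier_mat m m"
  unfolding euler_mat_def by simp

lemma euler_mat_skew_at_mutable:
  assumes quiver: "ice_quiver m n Q1 F1 src tgt" and nm: "n \<le> m" and i: "i < n" and k: "k < m"
  shows "euler_mat m n Q1 F1 src tgt $$ (k,i) = - euler_mat m n Q1 F1 src tgt $$ (i,k)"
proof -
  have frozen: "src a > n \<and> tgt a > n" if "a \<in> F1" for a
    using quiver that unfolding ice_quiver_def by auto
  have "{a \<in> Q1. a \<notin> F1 \<and> src a = Suc i \<and> tgt a = Suc k} = {a \<in> Q1. src a = Suc i \<and> tgt a = Suc k}"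
    and "{a \<in> Q1. a \<notin> F1 \<and> src a = Suc k \<and> tgt a = Suc i} = {a \<in> Q1. src a = Suc k \<and> tgt a = Suc i}"
    using frozen i by fastforce+
  then show ?thesis
    using i k nm unfolding euler_mat_def euler_entry_def by simp
qed

theorem proposition4p1:
  fixes m n :: nat and Q1 F1 :: "'e set" and src tgt :: "'e \<Rightarrow> nat"
  assumes "1 \<le> n" "n \<le> m"
    and "ice_quiver m n Q1 F1 src tgt"
    and "det (euler_mat m n Q1 F1 src tgt) \<noteq> 0"
  shows "let Bh = euler_mat m n Q1 F1 src tgt;
             Bt = mat m n (\<lambda>(i,j). Bh $$ (i,j));
             d = \<bar>det Bh\<bar>;
             Binv = the (mat_inverse (map_mat rat_of_int Bh));
             Lam = smult_mat (rat_of_int d) (transpose_mat Binv - Binv)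
         in \<exists>L :: int mat. map_mat rat_of_int L = Lam \<and> compatible_pair Bt L \<and>
              compatible_of_type Bt L (smult_mat (2 * d) (1\<^sub>m n))"
proof -
  let ?A = "euler_mat m n Q1 F1 src tgt"
  let ?L = "sgn (det ?A) \<cdot>\<^sub>m skew_adj ?A"
  have "compatible_of_type (mat m n (\<lambda>(i,j). ?A $$ (i,j))) ?L (2 * \<bar>det ?A\<bar> \<cdot>\<^sub>m 1\<^sub>m n)"
    using compatible_of_type_sgn_det_skew_adj[OF euler_mat_carrier assms(2,4)]
      euler_mat_skew_at_mutable[OF assms(3,2)] by blast
  moreover have "map_mat rat_of_int ?L
      = rat_of_int \<bar>det ?A\<bar> \<cdot>\<^sub>m (transpose_mat (the (mat_inverse (map_mat rat_of_int ?A)))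
          - the (mat_inverse (map_mat rat_of_int ?A)))"
    using of_int_sgn_det_skew_adj[OF euler_mat_carrier assms(4)] .
  ultimately show ?thesis
    unfolding Let_def compatible_pair_def by blast
qed

end
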